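(* Let $\Lambda\subseteq[0,\infty]$. Suppose there are constants $c_\ell,c_\pi,c_m>0$, $\lambda_\pi<\infty$, $C_{\ell,3},C_{\pi,3}<\infty$ such that: (a) for all $i\in[n]$ and all $\lambda,\lambda'\in\Lambda$, the function $m(P_{-i},\cdot,\lambda)$ has $\nu(r)=c_m r^2$ gradient growth and $\nabla^2_\beta m(P_{-i},\hat\beta(\lambda),\lambda')\succeq c_{\lambda',\lambda}I_d$, where $c_{\lambda',\lambda}:=c_\ell+\lambda' c_\pi\mathbf 1\{\lambda\ge\lambda_\pi\}$; (b) $B_{s,r}<\infty$ for each $(s,r)\in\{(0,3),(1,3),(1,4)\}$; (c) $\mathrm{Lip}(\nabla^2_\beta m(P_{-i},\cdot,\lambda))\le C_{\ell,3}+\lambda C_{\pi,3}$ for all $\lambda\in\Lambda$, $i\in[n]$. Then for each $\lambda\in\Lambda$, $$|\mathrm{ACV}(\lambda)-\mathrm{CV}(\lambda)|\le \frac{\kappa_2}{n^2}\frac{B_{0,3}}{c_m^2}+\frac{\kappa_2}{n^3}\frac{B_{1,3}}{c_m^3}+\frac{\kappa_2^2}{n^4}\frac{B_{1,4}}{2c_m^4},$$ where $\kappa_2:=\sup_{\lambda\ge0}\frac{C_{\ell,3}+\lambda C_{\pi,3}}{2!\,(c_\ell+\lambda c_\pi\mathbf 1\{\lambda\ge\lambda_\pi\})}$.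
   Context: Data $z_1,\dots,z_n$ lie in a set $\mathcal Z$; $\ell:\mathcal Z\times\mathbb{R}^d\to\mathbb{R}$ is a loss and $\pi:\mathbb{R}^d\to\mathbb{R}$ a regularizer (assumed sufficiently differentiable for all expressions to make sense). For a measure $\mu$ on $\mathcal Z$, $\ell(\mu,\beta):=\int\ell(z,\beta)\,d\mu(z)$ and $m(\mu,\beta,\lambda):=\ell(\mu,\beta)+\lambda\pi(\beta)$. Let $P_n:=\frac1n\sum_{i=1}^n\delta_{z_i}$ and $P_{-i}:=\frac1n\sum_{j\ne i}\delta_{z_j}$. Define $\hat\beta(\lambda):=\arg\min_\beta m(P_n,\beta,\lambda)$ for $\lambda\in[0,\infty)$ and $\hat\beta(\infty):=\arg\min_\beta\pi(\beta)$; $\hat\beta_{-i}(\lambda):=\arg\min_\beta m(P_{-i},\beta,\lambda)=\arg\min_\beta\frac1n\sum_{j\neq i}\ell(z_j,\beta)+\lambda\pi(\beta)$. $\mathrm{CV}(\lambda):=\frac1n\sum_{i=1}^n\ell(z_i,\hat\beta_{-i}(\lambda))$. The approximate leave-one-out estimator is $\tilde\beta_{-i}(\lambda):=\hat\beta(\lambda)+\nabla^2_\beta m(P_{-i},\hat\beta(\lambda),\lambda)^{-1}\frac{\nabla_\beta\ell(z_i,\hat\beta(\lambda))}{n}$ and $\mathrm{ACV}(\lambda):=\frac1n\sum_{i=1}^n\ell(z_i,\tilde\beta_{-i}(\lambda))$. $\|\cdot\|_2$ is the Euclidean norm; for a matrix or tensor $H$, $\|H\|_{op}:=\sup_{v\ne0}\|H[v]\|_{op}/\|v\|_2$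 with $\|v\|_{op}=\|v\|_2$ for vectors; $\mathrm{Lip}(f):=\sup_{x\ne y}\|f(x)-f(y)\|_{op}/\|x-y\|_2$. $B_{s,r}:=\sup_{\lambda\in\Lambda}\frac1n\sum_{i=1}^n\mathrm{Lip}(\nabla_\beta\ell(z_i,\cdot))^s\|\nabla_\beta\ell(z_i,\hat\beta(\lambda))\|_2^r$. A function $\varphi$ has $\nu$ gradient growth if it is subdifferentiable and $\nu(\|x-y\|_2)\le\langle y-x,u-v\rangle$ for all $x,y$ and all $u\in\partial\varphi(y),v\in\partial\varphi(x)$. *)

theory Defs
  imports "HOL-Analysis.Analysis"
begin

definition subdiff :: "('a::real_inner \<Rightarrow> real) \<Rightarrow> 'a \<Rightarrow> 'a set" where
  "subdiff f x = {u. \<forall>y. f x + u \<bullet> (y - x) \<le> f y}"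

definition gradient_growth :: "(real \<Rightarrow> real) \<Rightarrow> ('a::real_inner \<Rightarrow> real) \<Rightarrow> bool" where
  "gradient_growth \<nu> \<phi> \<longleftrightarrow> (\<forall>x. subdiff \<phi> x \<noteq> {}) \<and>
     (\<forall>x y u v. u \<in> subdiff \<phi> y \<longrightarrow> v \<in> subdiff \<phi> x \<longrightarrow> \<nu> (norm (x - y)) \<le> (y - x) \<bullet> (u - v))"

definition Lip :: "('a::real_normed_vector \<Rightarrow> 'b::real_normed_vector) \<Rightarrow> ereal" where
  "Lip f = (SUP p \<in> {(x, y). x \<noteq> y}. ereal (norm (f (fst p) - f (snd p)) / norm (fst p - snd p)))"

definition opnorm :: "real^'n^'m \<Rightarrow> real" where
  "opnorm A = onorm (\<lambda>v. A *v v)"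

definition Lip_op :: "('a::real_normed_vector \<Rightarrow> real^'n^'m) \<Rightarrow> ereal" where
  "Lip_op f = (SUP p \<in> {(x, y). x \<noteq> y}. ereal (opnorm (f (fst p) - f (snd p)) / norm (fst p - snd p)))"

definition m_full :: "('z \<Rightarrow> real^'d \<Rightarrow> real) \<Rightarrow> (real^'d \<Rightarrow> real) \<Rightarrow> (nat \<Rightarrow> 'z) \<Rightarrow> nat
    \<Rightarrow> real^'d \<Rightarrow> real \<Rightarrow> real" where
  "m_full L \<pi> z n \<beta> lam = (\<Sum>j\<in>{1..n}. L (z j) \<beta>) / real n + lam * \<pi> \<beta>"

definition m_loo :: "('z \<Rightarrow> real^'d \<Rightarrow> real) \<Rightarrow> (real^'d \<Rightarrow> real) \<Rightarrow> (nat \<Rightarrow> 'z) \<Rightarrow> nat \<Rightarrow> nat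
    \<Rightarrow> real^'d \<Rightarrow> real \<Rightarrow> real" where
  "m_loo L \<pi> z n i \<beta> lam = (\<Sum>j\<in>{1..n} - {i}. L (z j) \<beta>) / real n + lam * \<pi> \<beta>"

definition hess_loo :: "('z \<Rightarrow> real^'d \<Rightarrow> real^'d^'d) \<Rightarrow> (real^'d \<Rightarrow> real^'d^'d) \<Rightarrow> (nat \<Rightarrow> 'z)
    \<Rightarrow> nat \<Rightarrow> nat \<Rightarrow> real^'d \<Rightarrow> real \<Rightarrow> real^'d^'d" where
  "hess_loo Hl Hp z n i \<beta> lam = (1 / real n) *\<^sub>R (\<Sum>j\<in>{1..n} - {i}. Hl (z j) \<beta>) + lam *\<^sub>R Hp \<beta>"

text \<open>CV(lam), with bhi i lam the leave-i-out minimizer.\<close>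
definition CV :: "('z \<Rightarrow> real^'d \<Rightarrow> real) \<Rightarrow> (nat \<Rightarrow> 'z) \<Rightarrow> nat \<Rightarrow> (nat \<Rightarrow> real \<Rightarrow> real^'d)
    \<Rightarrow> real \<Rightarrow> real" where
  "CV L z n bhi lam = (\<Sum>i\<in>{1..n}. L (z i) (bhi i lam)) / real n"

text \<open>Approximate leave-one-out estimator and ACV(lam), with bh lam the full-data minimizer.\<close>
definition approx_loo :: "('z \<Rightarrow> real^'d \<Rightarrow> real^'d) \<Rightarrow> ('z \<Rightarrow> real^'d \<Rightarrow> real^'d^'d)
    \<Rightarrow> (real^'d \<Rightarrow> real^'d^'d) \<Rightarrow> (nat \<Rightarrow> 'z) \<Rightarrow> nat \<Rightarrow> (real \<Rightarrow> real^'d) \<Rightarrow> nat \<Rightarrow> real \<Rightarrow> real^'d" where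
  "approx_loo gl Hl Hp z n bh i lam =
     bh lam + matrix_inv (hess_loo Hl Hp z n i (bh lam) lam) *v ((1 / real n) *\<^sub>R gl (z i) (bh lam))"

definition ACV :: "('z \<Rightarrow> real^'d \<Rightarrow> real) \<Rightarrow> ('z \<Rightarrow> real^'d \<Rightarrow> real^'d) \<Rightarrow> ('z \<Rightarrow> real^'d \<Rightarrow> real^'d^'d)
    \<Rightarrow> (real^'d \<Rightarrow> real^'d^'d) \<Rightarrow> (nat \<Rightarrow> 'z) \<Rightarrow> nat \<Rightarrow> (real \<Rightarrow> real^'d) \<Rightarrow> real \<Rightarrow> real" where
  "ACV L gl Hl Hp z n bh lam = (\<Sum>i\<in>{1..n}. L (z i) (approx_loo gl Hl Hp z n bh i lam)) / real n"

definition Bsr :: "('z \<Rightarrow> real^'d \<Rightarrow> real^'d) \<Rightarrow> (nat \<Rightarrow> 'z) \<Rightarrow> nat \<Rightarrow> (real \<Rightarrow> real^'d) \<Rightarrow> real set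
    \<Rightarrow> nat \<Rightarrow> nat \<Rightarrow> ereal" where
  "Bsr gl z n bh \<Lambda> s r = (SUP lam\<in>\<Lambda>.
     (\<Sum>i\<in>{1..n}. Lip (gl (z i)) ^ s * ereal (norm (gl (z i) (bh lam)) ^ r)) / ereal (real n))"

definition kappa2 :: "real \<Rightarrow> real \<Rightarrow> real \<Rightarrow> real \<Rightarrow> real \<Rightarrow> ereal" where
  "kappa2 Cl3 Cp3 cl cp lpi = (SUP lam\<in>{0..}.
     ereal ((Cl3 + lam * Cp3) / (fact 2 * (cl + lam * cp * (if lam \<ge> lpi then 1 else 0)))))"

end

theory Submission
  imports Defs
begin

(* Fix lam and i and let G be the gradient of m(P_{-i},.,lam). It vanishes at the leave-one-out
   minimizer and equals -grad l(z_i,beta_hat)/n at the full minimizer beta_hat, so c_m-strong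
   monotonicity of G puts the two minimizers within rho = |grad l(z_i,beta_hat)| / (n c_m) of each
   other. The approximation beta_tilde_{-i} is one Newton step for G started at beta_hat; a Hessian
   that is c-coercive at beta_hat and M-Lipschitz makes that step err by at most M/(2c) rho^2, and
   M/(2c) <= kappa_2. A first-order expansion of l(z_i,.) around the exact minimizer, with Lipschitz
   gradient, then bounds |l(z_i,beta_tilde_{-i}) - l(z_i,beta_hat_{-i})| by
   kappa_2 rho^2 (|grad l(z_i,beta_hat)| + Lip rho) + Lip (kappa_2 rho^2)^2 / 2,
   and averaging over i gives the three terms. *)

section \<open>Calculus along segments\<close>

lemma has_real_derivative_along_line:
  fixes f :: "'a::real_inner \<Rightarrow> real"
  assumes "\<And>x. (f has_derivative (\<lambda>h. g x \<bullet> h)) (at x)"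
  shows "((\<lambda>t. f (a + t *\<^sub>R d)) has_real_derivative g (a + t *\<^sub>R d) \<bullet> d) (at t)"
proof -
  have "((\<lambda>t. a + t *\<^sub>R d) has_derivative (\<lambda>s. s *\<^sub>R d)) (at t)"
    by (auto intro!: derivative_eq_intros)
  from has_derivative_compose[OF this assms]
  show ?thesis unfolding has_field_derivative_def
    by (rule has_derivative_eq_rhs) (simp add: fun_eq_iff mult.commute)
qed

lemma has_real_derivative_inner_along_line:
  fixes F :: "real^'n \<Rightarrow> real^'m"
  assumes "\<And>x. (F has_derivative (\<lambda>h. A x *v h)) (at x)"
  shows "((\<lambda>t. w \<bullet> F (a + t *\<^sub>R d)) has_real_derivative w \<bullet> (A (a + t *\<^sub>R d) *v d)) (at t)"
proof -
  have "((\<lambda>t. a + t *\<^sub>R d) has_derivative (\<lambda>s. s *\<^sub>R d)) (at t)"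
    by (auto intro!: derivative_eq_intros)
  from has_derivative_inner_right[OF has_derivative_compose[OF this assms]]
  show ?thesis unfolding has_field_derivative_def
    by (rule has_derivative_eq_rhs) (simp add: fun_eq_iff mult.commute matrix_vector_mult_scaleR)
qed

lemma increment_le_of_derivative_le_affine:
  fixes \<phi> \<phi>' :: "real \<Rightarrow> real"
  assumes "\<And>t. (\<phi> has_real_derivative \<phi>' t) (at t)"
    and "\<And>t. 0 \<le> t \<Longrightarrow> t \<le> 1 \<Longrightarrow> \<phi>' t \<le> a + b * t"
  shows "\<phi> 1 - \<phi> 0 \<le> a + b / 2"
proof -
  define \<psi> where "\<psi> t = \<phi> t - a * t - b / 2 * t\<^sup>2" for t
  have "(\<psi> has_real_derivative \<phi>' t - a - b * t) (at t)" for t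
    unfolding \<psi>_def by (auto intro!: derivative_eq_intros assms(1))
  then obtain s where s: "0 < s" "s < 1" "\<psi> 1 - \<psi> 0 = \<phi>' s - a - b * s"
    using MVT2[of 0 1 \<psi> "\<lambda>t. \<phi>' t - a - b * t"] by auto
  then show ?thesis using assms(2)[of s] unfolding \<psi>_def by simp
qed

lemma abs_increment_le_of_abs_derivative_le_affine:
  fixes \<phi> \<phi>' :: "real \<Rightarrow> real"
  assumes "\<And>t. (\<phi> has_real_derivative \<phi>' t) (at t)"
    and "\<And>t. 0 \<le> t \<Longrightarrow> t \<le> 1 \<Longrightarrow> \<bar>\<phi>' t\<bar> \<le> a + b * t"
  shows "\<bar>\<phi> 1 - \<phi> 0\<bar> \<le> a + b / 2"
proof -
  have "\<phi> 1 - \<phi> 0 \<le> a + b / 2"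
    by (rule increment_le_of_derivative_le_affine[OF assms(1)]) (use assms(2) in fastforce)
  moreover have "(- \<phi> 1) - (- \<phi> 0) \<le> a + b / 2"
    by (rule increment_le_of_derivative_le_affine[of _ "\<lambda>t. - \<phi>' t"])
       (use assms in \<open>force intro!: derivative_eq_intros\<close>)+
  ultimately show ?thesis by linarith
qed

lemma lipschitz_gradient_increment:
  fixes f :: "'a::real_inner \<Rightarrow> real"
  assumes "\<And>x. (f has_derivative (\<lambda>h. g x \<bullet> h)) (at x)"
    and "Li-lipschitz_on UNIV g"
  shows "\<bar>f y - f x\<bar> \<le> norm (g x) * norm (y - x) + Li / 2 * (norm (y - x))\<^sup>2"
proof -
  define d where "d = y - x"
  have "\<bar>g (x + t *\<^sub>R d) \<bullet> d\<bar> \<le> norm (g x) * norm d + (Li * (norm d)\<^sup>2) * t"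
    if "0 \<le> t" for t
  proof -
    have "norm (g (x + t *\<^sub>R d)) \<le> norm (g x) + Li * (t * norm d)"
      using lipschitz_on_normD[OF assms(2), of "x + t *\<^sub>R d" x] that
        norm_triangle_sub[of "g (x + t *\<^sub>R d)" "g x"]
      by simp
    then have "norm (g (x + t *\<^sub>R d)) * norm d \<le> (norm (g x) + Li * (t * norm d)) * norm d"
      by (rule mult_right_mono) simp
    then show ?thesis
      using Cauchy_Schwarz_ineq2[of "g (x + t *\<^sub>R d)" d]
      by (simp add: algebra_simps power2_eq_square)
  qed
  then have "\<bar>f (x + 1 *\<^sub>R d) - f (x + 0 *\<^sub>R d)\<bar> \<le> norm (g x) * norm d + Li * (norm d)\<^sup>2 / 2"
    by (rule abs_increment_le_of_abs_derivative_le_affine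
        [OF has_real_derivative_along_line[of f g, OF assms(1)]]) simp
  then show ?thesis unfolding d_def by simp
qed

section \<open>First-order optimality and strong monotonicity\<close>

lemma subgradient_eq_gradient:
  fixes f :: "'a::real_inner \<Rightarrow> real"
  assumes "(f has_derivative (\<lambda>h. g \<bullet> h)) (at x)" and "u \<in> subdiff f x"
  shows "u = g"
proof -
  have "((\<lambda>y. f y - u \<bullet> (y - x)) has_derivative (\<lambda>h. g \<bullet> h - u \<bullet> h)) (at x)"
    by (auto intro!: derivative_eq_intros assms(1))
  moreover have "\<forall>\<^sub>F y in at x. f x - u \<bullet> (x - x) \<le> f y - u \<bullet> (y - x)"
    using assms(2) by (auto simp: subdiff_def algebra_simps)
  ultimately have "(\<lambda>h. g \<bullet> h - u \<bullet> h) = (\<lambda>h. 0)"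
    by (rule has_derivative_local_min)
  then have "(g - u) \<bullet> (g - u) = 0" by (metis inner_diff_left)
  then show ?thesis by simp
qed

lemma gradient_growth_gradient:
  fixes f :: "'a::real_inner \<Rightarrow> real"
  assumes "gradient_growth \<nu> f" and "\<And>x. (f has_derivative (\<lambda>h. g x \<bullet> h)) (at x)"
  shows "\<nu> (norm (x - y)) \<le> (y - x) \<bullet> (g y - g x)"
proof -
  have "g x \<in> subdiff f x" for x
    using assms subgradient_eq_gradient unfolding gradient_growth_def by blast
  then show ?thesis using assms(1) unfolding gradient_growth_def by blast
qed

lemma gradient_zero_at_arg_min:
  fixes f :: "'a::real_inner \<Rightarrow> real"
  assumes "(f has_derivative (\<lambda>h. g \<bullet> h)) (at x)" and "is_arg_min f (\<lambda>_. True) x"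
  shows "g = 0"
proof -
  have "\<forall>\<^sub>F y in at x. f x \<le> f y"
    using assms(2) by (auto simp: is_arg_min_def not_less)
  then have "(\<lambda>h. g \<bullet> h) = (\<lambda>h. 0)"
    by (rule has_derivative_local_min[OF assms(1)])
  then have "g \<bullet> g = 0" by metis
  then show ?thesis by simp
qed

lemma dist_le_of_strongly_monotone:
  fixes x y u v :: "'a::real_inner"
  assumes "cm * (norm (x - y))\<^sup>2 \<le> (y - x) \<bullet> (u - v)" and "cm > 0"
  shows "norm (x - y) \<le> norm (u - v) / cm"
proof -
  have "cm * (norm (x - y))\<^sup>2 \<le> norm (x - y) * norm (u - v)"
    using assms(1) norm_cauchy_schwarz[of "y - x" "u - v"] by (simp add: norm_minus_commute)
  then show ?thesis using assms(2)
    by (cases "x = y") (auto simp: field_simps power2_eq_square)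
qed

lemma opnorm_nonneg: "0 \<le> opnorm A"
  unfolding opnorm_def by (rule onorm_pos_le[OF matrix_vector_mul_bounded_linear])

lemma norm_matrix_vector_mult_le_opnorm: "norm (A *v v) \<le> opnorm A * norm v"
  unfolding opnorm_def by (rule onorm[OF matrix_vector_mul_bounded_linear])

lemma opnorm_lipschitz_const_nonneg:
  fixes H :: "real^'n \<Rightarrow> real^'k^'m"
  assumes "\<And>x y. opnorm (H x - H y) \<le> M * norm (x - y)"
  shows "0 \<le> M"
proof -
  obtain k :: 'n where True by simp
  have "0 \<le> opnorm (H 0 - H (axis k 1))" by (rule opnorm_nonneg)
  also have "\<dots> \<le> M * norm (0 - axis k (1::real))" by (rule assms)
  finally show ?thesis by (simp add: norm_axis_1)
qed

lemma Lip_nonneg: "0 \<le> Lip (f :: real^'n \<Rightarrow> 'b::real_normed_vector)"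
proof -
  obtain k :: 'n where True by simp
  have "ereal (norm (f 0 - f (axis k 1)) / norm (0 - axis k (1::real))) \<le> Lip f"
    unfolding Lip_def by (rule SUP_upper2[of "(0, axis k 1)"]) (auto simp: axis_eq_0_iff)
  then show ?thesis by (rule order.trans[rotated]) simp
qed

lemma lipschitz_on_of_Lip_le:
  assumes "Lip (f :: real^'n \<Rightarrow> 'b::real_normed_vector) \<le> ereal Li"
  shows "Li-lipschitz_on UNIV f"
proof (rule lipschitz_onI)
  show "0 \<le> Li" using order.trans[OF Lip_nonneg assms] by simp
  fix x y :: "real^'n"
  show "dist (f x) (f y) \<le> Li * dist x y"
  proof (cases "x = y")
    case False
    have "ereal (norm (f x - f y) / norm (x - y)) \<le> Lip f"
      unfolding Lip_def using False by (intro SUP_upper2[of "(x, y)"]) auto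
    with assms have "norm (f x - f y) / norm (x - y) \<le> Li"
      using ereal_less_eq(3) order.trans by blast
    with False show ?thesis by (simp add: dist_norm divide_le_eq mult.commute)
  qed simp
qed

lemma opnorm_diff_le_of_Lip_op_le:
  assumes "Lip_op (f :: 'a::real_normed_vector \<Rightarrow> real^'n^'m) \<le> ereal M"
  shows "opnorm (f x - f y) \<le> M * norm (x - y)"
proof (cases "x = y")
  case True
  then show ?thesis by (simp add: opnorm_def onorm_zero)
next
  case False
  have "ereal (opnorm (f x - f y) / norm (x - y)) \<le> Lip_op f"
    unfolding Lip_op_def using False by (intro SUP_upper2[of "(x, y)"]) auto
  with assms have "opnorm (f x - f y) / norm (x - y) \<le> M"
    using ereal_less_eq(3) order.trans by blast
  with False show ?thesis by (simp add: divide_le_eq mult.commute)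
qed

lemma matrix_vector_mult_uminus_right: "A *v (- x) = - (A *v x)"
  for A :: "'a::ring_1^'n^'m"
  by (simp add: matrix_vector_mult_def vec_eq_iff sum_negf)

lemma matrix_sum_vector_mult: "finite S \<Longrightarrow> sum A S *v x = (\<Sum>j\<in>S. A j *v x)"
  for A :: "'a \<Rightarrow> real^'n^'m"
  by (induction S rule: finite_induct) (auto simp: matrix_vector_mult_add_rdistrib)

lemma coercive_matrix_inverse:
  fixes A :: "real^'n^'n"
  assumes coercive: "\<And>v. c * (v \<bullet> v) \<le> v \<bullet> (A *v v)" and "c > 0"
  shows "A *v (matrix_inv A *v w) = w" "matrix_inv A *v (A *v w) = w"
    and "c * norm (matrix_inv A *v w) \<le> norm w"
proof -
  have "x = 0" if "A *v x = 0" for x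
    using coercive[of x] that \<open>c > 0\<close>
    by (simp add: mult_le_0_iff) (metis inner_eq_zero_iff inner_ge_zero order.antisym)
  then have "invertible A"
    by (simp add: invertible_left_inverse matrix_left_invertible_ker)
  then have inv: "A ** matrix_inv A = mat 1 \<and> matrix_inv A ** A = mat 1"
    unfolding matrix_inv_def invertible_def by (rule someI_ex)
  then show Ainv: "A *v (matrix_inv A *v w) = w" "matrix_inv A *v (A *v w) = w"
    by (simp_all add: matrix_vector_mul_assoc)
  define v where "v = matrix_inv A *v w"
  have "c * (norm v)\<^sup>2 \<le> norm v * norm w"
    using coercive[of v] norm_cauchy_schwarz[of v w] Ainv(1)
    by (simp add: v_def power2_norm_eq_inner)
  then show "c * norm v \<le> norm w"
    by (cases "v = 0") (auto simp: power2_eq_square)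
qed

section \<open>Error of a Newton step\<close>

lemma gradient_taylor_remainder:
  fixes G :: "real^'n \<Rightarrow> real^'m" and H :: "real^'n \<Rightarrow> real^'n^'m"
  assumes dG: "\<And>x. (G has_derivative (\<lambda>h. H x *v h)) (at x)"
    and lipH: "\<And>x y. opnorm (H x - H y) \<le> M * norm (x - y)"
  shows "norm (G y - G x - H x *v (y - x)) \<le> M / 2 * (norm (y - x))\<^sup>2"
proof -
  define d where "d = y - x"
  define F where "F = G y - G x - H x *v d"
  define \<psi> where "\<psi> t = F \<bullet> G (x + t *\<^sub>R d) - t * (F \<bullet> (H x *v d))" for t
  have "(\<psi> has_real_derivative F \<bullet> (H (x + t *\<^sub>R d) *v d) - F \<bullet> (H x *v d)) (at t)" for t
    unfolding \<psi>_def by (auto intro!: derivative_eq_intros has_real_derivative_inner_along_line[OF dG])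
  moreover have "F \<bullet> (H (x + t *\<^sub>R d) *v d) - F \<bullet> (H x *v d) \<le> 0 + (norm F * M * (norm d)\<^sup>2) * t"
    if "0 \<le> t" for t
  proof -
    have "F \<bullet> (H (x + t *\<^sub>R d) *v d) - F \<bullet> (H x *v d) = F \<bullet> ((H (x + t *\<^sub>R d) - H x) *v d)"
      by (simp add: matrix_vector_mult_diff_rdistrib inner_diff_right)
    also have "\<dots> \<le> norm F * norm ((H (x + t *\<^sub>R d) - H x) *v d)"
      by (rule norm_cauchy_schwarz)
    also have "\<dots> \<le> norm F * (opnorm (H (x + t *\<^sub>R d) - H x) * norm d)"
      by (intro mult_left_mono norm_matrix_vector_mult_le_opnorm norm_ge_zero)
    also have "\<dots> \<le> norm F * ((M * (t * norm d)) * norm d)"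
      using lipH[of "x + t *\<^sub>R d" x] that by (intro mult_left_mono mult_right_mono) auto
    finally show ?thesis by (simp add: algebra_simps power2_eq_square)
  qed
  ultimately have "\<psi> 1 - \<psi> 0 \<le> 0 + norm F * M * (norm d)\<^sup>2 / 2"
    by (rule increment_le_of_derivative_le_affine)
  moreover have "\<psi> 1 - \<psi> 0 = (norm F)\<^sup>2"
    unfolding \<psi>_def F_def d_def by (simp add: power2_norm_eq_inner algebra_simps inner_diff_right)
  ultimately have "(norm F)\<^sup>2 \<le> norm F * (M / 2 * (norm d)\<^sup>2)" by simp
  then have "norm F \<le> M / 2 * (norm d)\<^sup>2"
    using opnorm_lipschitz_const_nonneg[OF lipH] by (cases "F = 0") (auto simp: power2_eq_square)
  then show ?thesis unfolding F_def d_def .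
qed

lemma newton_step_error:
  fixes G :: "real^'n \<Rightarrow> real^'n" and H :: "real^'n \<Rightarrow> real^'n^'n"
  assumes dG: "\<And>x. (G has_derivative (\<lambda>h. H x *v h)) (at x)"
    and lipH: "\<And>x y. opnorm (H x - H y) \<le> M * norm (x - y)"
    and coercive: "\<And>v. c * (v \<bullet> v) \<le> v \<bullet> (H b *v v)" "c > 0"
    and root: "G b' = 0"
  shows "norm (b - matrix_inv (H b) *v G b - b') \<le> M / (2 * c) * (norm (b - b'))\<^sup>2"
proof -
  define R where "R = G b' - G b - H b *v (b' - b)"
  have "matrix_inv (H b) *v (H b *v (b' - b)) = b' - b"
    by (rule coercive_matrix_inverse(2)[OF coercive])
  then have "b - matrix_inv (H b) *v G b - b' = matrix_inv (H b) *v R"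
    unfolding R_def root
    by (simp add: matrix_vector_mult_diff_distrib matrix_vector_mult_uminus_right)
  then have "c * norm (b - matrix_inv (H b) *v G b - b') \<le> norm R"
    using coercive_matrix_inverse(3)[OF coercive] by simp
  also have "\<dots> \<le> M / 2 * (norm (b - b'))\<^sup>2"
    unfolding R_def using gradient_taylor_remainder[OF dG lipH, of b' b]
    by (simp add: norm_minus_commute)
  finally show ?thesis using \<open>c > 0\<close> by (simp add: field_simps)
qed

lemma newton_step_loss_error:
  fixes l :: "real^'n \<Rightarrow> real" and g G :: "real^'n \<Rightarrow> real^'n" and H :: "real^'n \<Rightarrow> real^'n^'n"
  assumes dl: "\<And>x. (l has_derivative (\<lambda>h. g x \<bullet> h)) (at x)"
    and dG: "\<And>x. (G has_derivative (\<lambda>h. H x *v h)) (at x)"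
    and lipH: "\<And>x y. opnorm (H x - H y) \<le> M * norm (x - y)"
    and coercive: "\<And>v. c * (v \<bullet> v) \<le> v \<bullet> (H b *v v)" "c > 0"
    and monotone: "cm * (norm (b - b'))\<^sup>2 \<le> (b' - b) \<bullet> (G b' - G b)" "cm > 0"
    and root: "G b' = 0"
    and lipg: "G b \<noteq> 0 \<Longrightarrow> Li-lipschitz_on UNIV g"
    \<comment> \<open>at \<open>G b = 0\<close> the Newton step is exact, so no regularity of \<open>g\<close> is needed there\<close>
  defines "K \<equiv> M / (2 * c)" and "\<rho> \<equiv> norm (G b) / cm"
  shows "\<bar>l (b - matrix_inv (H b) *v G b) - l b'\<bar>
           \<le> K * \<rho>\<^sup>2 * (norm (g b) + Li * \<rho>) + Li / 2 * (K * \<rho>\<^sup>2)\<^sup>2"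
proof -
  define b\<^sub>N where "b\<^sub>N = b - matrix_inv (H b) *v G b"
  have K0: "0 \<le> K"
    unfolding K_def using opnorm_lipschitz_const_nonneg[OF lipH] \<open>c > 0\<close> by simp
  have r: "norm (b - b') \<le> \<rho>"
    using dist_le_of_strongly_monotone[OF monotone] root by (simp add: \<rho>_def)
  have "norm (b\<^sub>N - b') \<le> K * (norm (b - b'))\<^sup>2"
    unfolding b\<^sub>N_def K_def by (rule newton_step_error[OF dG lipH coercive root])
  also have "\<dots> \<le> K * \<rho>\<^sup>2"
    using r K0 by (intro mult_left_mono power_mono) auto
  finally have D: "norm (b\<^sub>N - b') \<le> K * \<rho>\<^sup>2" .
  show ?thesis
  proof (cases "G b = 0")
    case True
    then have "b\<^sub>N = b'" using D by (simp add: \<rho>_def)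
    then show ?thesis using True by (simp add: b\<^sub>N_def \<rho>_def)
  next
    case False
    note lip = lipg[OF False]
    have Li0: "0 \<le> Li" using lipschitz_on_nonneg[OF lip] .
    have "norm (g b') \<le> norm (g b) + Li * \<rho>"
      using lipschitz_on_normD[OF lip, of b' b] r norm_triangle_sub[of "g b'" "g b"]
        mult_left_mono[OF r Li0] by (simp add: norm_minus_commute)
    have "\<bar>l b\<^sub>N - l b'\<bar> \<le> norm (g b') * norm (b\<^sub>N - b') + Li / 2 * (norm (b\<^sub>N - b'))\<^sup>2"
      by (rule lipschitz_gradient_increment[OF dl lip])
    also have "\<dots> \<le> (norm (g b) + Li * \<rho>) * (K * \<rho>\<^sup>2) + Li / 2 * (K * \<rho>\<^sup>2)\<^sup>2"
      using D \<open>norm (g b') \<le> norm (g b) + Li * \<rho>\<close> Li0 \<open>cm > 0\<close>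
      unfolding \<rho>_def by (intro add_mono mult_mono mult_left_mono power_mono) auto
    finally show ?thesis unfolding b\<^sub>N_def by (simp add: algebra_simps)
  qed
qed

section \<open>The regularized leave-one-out problem\<close>

lemma ereal_mult_div_mono:
  assumes "0 \<le> k" "ereal k \<le> \<kappa>" "0 \<le> a" "ereal a \<le> B" "p > 0"
  shows "ereal (k * a / p) \<le> \<kappa> * B / ereal p"
proof -
  have "ereal k * ereal a \<le> \<kappa> * B"
    by (rule ereal_mult_mono) (use assms order.trans[of 0 "ereal k" \<kappa>] in auto)
  then have "ereal k * ereal a * ereal (1 / p) \<le> \<kappa> * B * ereal (1 / p)"
    by (rule ereal_mult_right_mono) (use assms in auto)
  then show ?thesis
    using assms(5) by (simp add: divide_ereal_def inverse_eq_divide)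
qed

lemma ereal_power2_mono:
  assumes "0 \<le> k" "ereal k \<le> \<kappa>"
  shows "ereal (k\<^sup>2) \<le> \<kappa>\<^sup>2"
proof -
  have "ereal k * ereal k \<le> \<kappa> * \<kappa>"
    by (rule ereal_mult_mono) (use assms order.trans[of 0 "ereal k" \<kappa>] in auto)
  then show ?thesis by (simp add: power2_eq_square)
qed

definition grad_loo :: "('z \<Rightarrow> real^'d \<Rightarrow> real^'d) \<Rightarrow> (real^'d \<Rightarrow> real^'d) \<Rightarrow> (nat \<Rightarrow> 'z)
    \<Rightarrow> nat \<Rightarrow> nat \<Rightarrow> real^'d \<Rightarrow> real \<Rightarrow> real^'d" where
  "grad_loo gl gp z n i \<beta> lam = (1 / real n) *\<^sub>R (\<Sum>j\<in>{1..n} - {i}. gl (z j) \<beta>) + lam *\<^sub>R gp \<beta>"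

lemma m_full_eq_m_loo:
  "i \<in> {1..n} \<Longrightarrow> m_full L \<pi> z n \<beta> lam = m_loo L \<pi> z n i \<beta> lam + L (z i) \<beta> / real n"
  by (simp add: m_full_def m_loo_def sum.remove add_divide_distrib)

text \<open>The comparison with the other
  \<open>Bsr\<close> terms is made in \<open>ereal\<close> and does not need them to be finite.\<close>
locale loo_problem =
  fixes L :: "'z \<Rightarrow> real^'d \<Rightarrow> real" and \<pi> :: "real^'d \<Rightarrow> real"
    and gl :: "'z \<Rightarrow> real^'d \<Rightarrow> real^'d" and Hl :: "'z \<Rightarrow> real^'d \<Rightarrow> real^'d^'d"
    and gp :: "real^'d \<Rightarrow> real^'d" and Hp :: "real^'d \<Rightarrow> real^'d^'d"
    and z :: "nat \<Rightarrow> 'z" and n :: nat and \<Lambda> :: "real set"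
    and bh :: "real \<Rightarrow> real^'d" and bhi :: "nat \<Rightarrow> real \<Rightarrow> real^'d"
    and cl cp cm lpi Cl3 Cp3 :: real
  assumes n_pos: "n > 0"
    and grad_l: "\<And>x \<beta>. (L x has_derivative (\<lambda>h. gl x \<beta> \<bullet> h)) (at \<beta>)"
    and hess_l: "\<And>x \<beta>. (gl x has_derivative (\<lambda>h. Hl x \<beta> *v h)) (at \<beta>)"
    and grad_p: "\<And>\<beta>. (\<pi> has_derivative (\<lambda>h. gp \<beta> \<bullet> h)) (at \<beta>)"
    and hess_p: "\<And>\<beta>. (gp has_derivative (\<lambda>h. Hp \<beta> *v h)) (at \<beta>)"
    and Lambda: "\<Lambda> \<subseteq> {0..}"
    and bh_min: "\<And>lam. lam \<in> \<Lambda> \<Longrightarrow> is_arg_min (\<lambda>\<beta>. m_full L \<pi> z n \<beta> lam) (\<lambda>_. True) (bh lam)"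
    and bhi_min: "\<And>i lam. i \<in> {1..n} \<Longrightarrow> lam \<in> \<Lambda> \<Longrightarrow>
                    is_arg_min (\<lambda>\<beta>. m_loo L \<pi> z n i \<beta> lam) (\<lambda>_. True) (bhi i lam)"
    and pos_consts: "cl > 0" "cp > 0" "cm > 0"
    and a_growth: "\<And>i lam. i \<in> {1..n} \<Longrightarrow> lam \<in> \<Lambda> \<Longrightarrow>
                    gradient_growth (\<lambda>r. cm * r\<^sup>2) (\<lambda>\<beta>. m_loo L \<pi> z n i \<beta> lam)"
    and a_hess: "\<And>i lam lam' v. i \<in> {1..n} \<Longrightarrow> lam \<in> \<Lambda> \<Longrightarrow> lam' \<in> \<Lambda> \<Longrightarrow>
                    (cl + lam' * cp * (if lam \<ge> lpi then 1 else 0)) * (v \<bullet> v)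
                      \<le> v \<bullet> (hess_loo Hl Hp z n i (bh lam) lam' *v v)"
    and b_13: "Bsr gl z n bh \<Lambda> 1 3 < \<infinity>"
    and c_lip: "\<And>i lam. i \<in> {1..n} \<Longrightarrow> lam \<in> \<Lambda> \<Longrightarrow>
                    Lip_op (\<lambda>\<beta>. hess_loo Hl Hp z n i \<beta> lam) \<le> ereal (Cl3 + lam * Cp3)"
begin

definition c_hess :: "real \<Rightarrow> real" where
  "c_hess lam = cl + lam * cp * (if lam \<ge> lpi then 1 else 0)"

definition kappa :: "real \<Rightarrow> real" where
  "kappa lam = (Cl3 + lam * Cp3) / (2 * c_hess lam)"

text \<open>\<open>real_of_ereal \<infinity> = 0\<close>, but \<open>lip i\<close> is only ever used where it is multiplied by a power
  of \<open>grad_norm lam i\<close>, and where that is non-zero the Lipschitz constant is finite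
  (\<open>Lip_gl_finite\<close>).\<close>
definition lip :: "nat \<Rightarrow> real" where
  "lip i = real_of_ereal (Lip (gl (z i)))"

definition grad_norm :: "real \<Rightarrow> nat \<Rightarrow> real" where
  "grad_norm lam i = norm (gl (z i) (bh lam))"

definition moment :: "nat \<Rightarrow> nat \<Rightarrow> real \<Rightarrow> real" where
  "moment s r lam = (\<Sum>i\<in>{1..n}. lip i ^ s * grad_norm lam i ^ r) / real n"

lemma has_derivative_m_loo:
  "((\<lambda>\<beta>. m_loo L \<pi> z n i \<beta> lam) has_derivative (\<lambda>h. grad_loo gl gp z n i \<beta> lam \<bullet> h)) (at \<beta>)"
proof -
  have m_loo_eq: "(\<lambda>\<beta>. m_loo L \<pi> z n i \<beta> lam)
      = (\<lambda>\<beta>. (1 / real n) * (\<Sum>j\<in>{1..n} - {i}. L (z j) \<beta>) + lam * \<pi> \<beta>)"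
    by (simp add: fun_eq_iff m_loo_def)
  have "((\<lambda>\<beta>. (1 / real n) * (\<Sum>j\<in>{1..n} - {i}. L (z j) \<beta>) + lam * \<pi> \<beta>) has_derivative
      (\<lambda>h. (1 / real n) * (\<Sum>j\<in>{1..n} - {i}. gl (z j) \<beta> \<bullet> h) + lam * (gp \<beta> \<bullet> h))) (at \<beta>)"
    by (intro has_derivative_add has_derivative_mult_right has_derivative_sum grad_l grad_p)
  then show ?thesis unfolding m_loo_eq
    by (rule has_derivative_eq_rhs) (simp add: fun_eq_iff grad_loo_def inner_add_left inner_sum_left)
qed

lemma has_derivative_grad_loo:
  "((\<lambda>\<beta>. grad_loo gl gp z n i \<beta> lam) has_derivative (\<lambda>h. hess_loo Hl Hp z n i \<beta> lam *v h)) (at \<beta>)"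
proof -
  have "((\<lambda>\<beta>. (1 / real n) *\<^sub>R (\<Sum>j\<in>{1..n} - {i}. gl (z j) \<beta>) + lam *\<^sub>R gp \<beta>) has_derivative
      (\<lambda>h. (1 / real n) *\<^sub>R (\<Sum>j\<in>{1..n} - {i}. Hl (z j) \<beta> *v h) + lam *\<^sub>R (Hp \<beta> *v h))) (at \<beta>)"
    by (intro has_derivative_add has_derivative_scaleR_right has_derivative_sum hess_l hess_p)
  then show ?thesis unfolding grad_loo_def
    by (rule has_derivative_eq_rhs)
      (simp add: fun_eq_iff hess_loo_def matrix_vector_mult_add_rdistrib matrix_sum_vector_mult
        scaleR_matrix_vector_assoc[symmetric])
qed

lemma average_le_Bsr:
  "lam \<in> \<Lambda> \<Longrightarrow> (\<Sum>i\<in>{1..n}. Lip (gl (z i)) ^ s * ereal (norm (gl (z i) (bh lam)) ^ r)) / ereal (real n)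
     \<le> Bsr gl z n bh \<Lambda> s r"
  unfolding Bsr_def by (rule SUP_upper)

lemma c_hess_pos: "lam \<in> \<Lambda> \<Longrightarrow> c_hess lam > 0"
  unfolding c_hess_def using pos_consts Lambda by (auto intro!: add_pos_nonneg mult_nonneg_nonneg)

lemma hess_loo_lipschitz:
  "i \<in> {1..n} \<Longrightarrow> lam \<in> \<Lambda> \<Longrightarrow>
    opnorm (hess_loo Hl Hp z n i x lam - hess_loo Hl Hp z n i y lam) \<le> (Cl3 + lam * Cp3) * norm (x - y)"
  by (rule opnorm_diff_le_of_Lip_op_le[OF c_lip])

lemma kappa_nonneg:
  assumes "lam \<in> \<Lambda>"
  shows "0 \<le> kappa lam"
proof -
  have "opnorm (hess_loo Hl Hp z n 1 x lam - hess_loo Hl Hp z n 1 y lam) \<le> (Cl3 + lam * Cp3) * norm (x - y)"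
    for x y using hess_loo_lipschitz[of 1 lam] n_pos assms by simp
  from opnorm_lipschitz_const_nonneg[OF this] c_hess_pos[OF assms]
  show ?thesis unfolding kappa_def by simp
qed

lemma kappa_le_kappa2: "lam \<in> \<Lambda> \<Longrightarrow> ereal (kappa lam) \<le> kappa2 Cl3 Cp3 cl cp lpi"
  unfolding kappa2_def kappa_def c_hess_def by (rule SUP_upper2[of lam]) (use Lambda in auto)

lemma grad_loo_at_loo_minimizer:
  "i \<in> {1..n} \<Longrightarrow> lam \<in> \<Lambda> \<Longrightarrow> grad_loo gl gp z n i (bhi i lam) lam = 0"
  by (rule gradient_zero_at_arg_min[OF has_derivative_m_loo bhi_min])

lemma grad_loo_at_full_minimizer:
  assumes "i \<in> {1..n}" "lam \<in> \<Lambda>"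
  shows "grad_loo gl gp z n i (bh lam) lam = - ((1 / real n) *\<^sub>R gl (z i) (bh lam))"
proof -
  have "((\<lambda>\<beta>. m_full L \<pi> z n \<beta> lam) has_derivative
      (\<lambda>h. (grad_loo gl gp z n i (bh lam) lam + (1 / real n) *\<^sub>R gl (z i) (bh lam)) \<bullet> h)) (at (bh lam))"
    unfolding m_full_eq_m_loo[OF assms(1)]
    using n_pos by (auto intro!: derivative_eq_intros has_derivative_m_loo grad_l simp: inner_add_left)
  from gradient_zero_at_arg_min[OF this bh_min[OF assms(2)]]
  show ?thesis by (simp add: eq_neg_iff_add_eq_0)
qed

lemma Lip_gl_finite:
  assumes "i \<in> {1..n}" "lam \<in> \<Lambda>" "gl (z i) (bh lam) \<noteq> 0"
  shows "Lip (gl (z i)) = ereal (lip i)"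
proof -
  have "Lip (gl (z i)) \<noteq> \<infinity>"
  proof
    assume "Lip (gl (z i)) = \<infinity>"
    with assms have "(\<Sum>j\<in>{1..n}. Lip (gl (z j)) ^ 1 * ereal (norm (gl (z j) (bh lam)) ^ 3)) = \<infinity>"
      by (subst sum_Pinfty) (auto intro!: bexI[of _ i])
    moreover have "\<infinity> / ereal (real n) = \<infinity>" using n_pos by simp
    ultimately have "Bsr gl z n bh \<Lambda> 1 3 = \<infinity>"
      using average_le_Bsr[OF assms(2), where s = 1 and r = 3] by simp
    with b_13 show False by simp
  qed
  with Lip_nonneg[of "gl (z i)"] show ?thesis
    unfolding lip_def by (cases "Lip (gl (z i))") auto
qed

lemma moment_le_Bsr:
  assumes "lam \<in> \<Lambda>" "r > 0"
  shows "ereal (moment s r lam) \<le> Bsr gl z n bh \<Lambda> s r"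
proof -
  have "Lip (gl (z i)) ^ s * ereal (norm (gl (z i) (bh lam)) ^ r) = ereal (lip i ^ s * grad_norm lam i ^ r)"
    if "i \<in> {1..n}" for i
    using Lip_gl_finite[OF that assms(1)] \<open>r > 0\<close>
    by (cases "gl (z i) (bh lam) = 0") (simp_all add: grad_norm_def zero_power zero_ereal_def[symmetric])
  then have "ereal (moment s r lam)
      = (\<Sum>i\<in>{1..n}. Lip (gl (z i)) ^ s * ereal (norm (gl (z i) (bh lam)) ^ r)) / ereal (real n)"
    using n_pos by (simp add: moment_def sum_ereal)
  also have "\<dots> \<le> Bsr gl z n bh \<Lambda> s r"
    by (rule average_le_Bsr[OF assms(1)])
  finally show ?thesis .
qed

lemma loss_error_approx_loo:
  assumes i: "i \<in> {1..n}" and lam: "lam \<in> \<Lambda>"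
  shows "\<bar>L (z i) (approx_loo gl Hl Hp z n bh i lam) - L (z i) (bhi i lam)\<bar>
    \<le> kappa lam * grad_norm lam i ^ 3 / (real n ^ 2 * cm ^ 2)
     + kappa lam * (lip i * grad_norm lam i ^ 3) / (real n ^ 3 * cm ^ 3)
     + (kappa lam)\<^sup>2 * (lip i * grad_norm lam i ^ 4) / (2 * real n ^ 4 * cm ^ 4)"
proof -
  let ?G = "\<lambda>\<beta>. grad_loo gl gp z n i \<beta> lam" and ?H = "\<lambda>\<beta>. hess_loo Hl Hp z n i \<beta> lam"
  define \<rho> where "\<rho> = grad_norm lam i / (real n * cm)"
  have newton: "bh lam - matrix_inv (?H (bh lam)) *v ?G (bh lam) = approx_loo gl Hl Hp z n bh i lam"
    by (simp add: approx_loo_def grad_loo_at_full_minimizer[OF i lam] matrix_vector_mult_uminus_right)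
  have rho: "norm (?G (bh lam)) / cm = \<rho>"
    using n_pos by (simp add: \<rho>_def grad_loo_at_full_minimizer[OF i lam] grad_norm_def)
  have lipg: "lipschitz_on (lip i) UNIV (gl (z i))" if "?G (bh lam) \<noteq> 0"
    using that Lip_gl_finite[OF i lam] grad_loo_at_full_minimizer[OF i lam]
    by (intro lipschitz_on_of_Lip_le) auto
  have "\<bar>L (z i) (approx_loo gl Hl Hp z n bh i lam) - L (z i) (bhi i lam)\<bar>
      \<le> kappa lam * \<rho>\<^sup>2 * (grad_norm lam i + lip i * \<rho>) + lip i / 2 * (kappa lam * \<rho>\<^sup>2)\<^sup>2"
    using newton_step_loss_error[OF grad_l has_derivative_grad_loo hess_loo_lipschitz[OF i lam]
        a_hess[OF i lam lam, folded c_hess_def] c_hess_pos[OF lam]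
        gradient_growth_gradient[OF a_growth[OF i lam] has_derivative_m_loo] pos_consts(3)
        grad_loo_at_loo_minimizer[OF i lam] lipg]
    unfolding newton rho kappa_def grad_norm_def by simp
  also have "\<dots> = kappa lam * grad_norm lam i ^ 3 / (real n ^ 2 * cm ^ 2)
     + kappa lam * (lip i * grad_norm lam i ^ 3) / (real n ^ 3 * cm ^ 3)
     + (kappa lam)\<^sup>2 * (lip i * grad_norm lam i ^ 4) / (2 * real n ^ 4 * cm ^ 4)"
    using n_pos pos_consts unfolding \<rho>_def
    by (simp add: field_simps power2_eq_square power3_eq_cube power4_eq_xxxx)
  finally show ?thesis .
qed

lemma ACV_CV_le_moments:
  assumes lam: "lam \<in> \<Lambda>"
  shows "\<bar>ACV L gl Hl Hp z n bh lam - CV L z n bhi lam\<bar>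
    \<le> kappa lam * moment 0 3 lam / (real n ^ 2 * cm ^ 2)
     + kappa lam * moment 1 3 lam / (real n ^ 3 * cm ^ 3)
     + (kappa lam)\<^sup>2 * moment 1 4 lam / (2 * real n ^ 4 * cm ^ 4)"
proof -
  have "\<bar>ACV L gl Hl Hp z n bh lam - CV L z n bhi lam\<bar>
      = \<bar>\<Sum>i\<in>{1..n}. L (z i) (approx_loo gl Hl Hp z n bh i lam) - L (z i) (bhi i lam)\<bar> / real n"
    unfolding ACV_def CV_def by (simp add: sum_subtractf abs_divide flip: diff_divide_distrib)
  also have "\<dots> \<le> (\<Sum>i\<in>{1..n}. \<bar>L (z i) (approx_loo gl Hl Hp z n bh i lam) - L (z i) (bhi i lam)\<bar>) / real n"
    by (intro divide_right_mono sum_abs) simp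
  also have "\<dots> \<le> (\<Sum>i\<in>{1..n}. kappa lam * grad_norm lam i ^ 3 / (real n ^ 2 * cm ^ 2)
     + kappa lam * (lip i * grad_norm lam i ^ 3) / (real n ^ 3 * cm ^ 3)
     + (kappa lam)\<^sup>2 * (lip i * grad_norm lam i ^ 4) / (2 * real n ^ 4 * cm ^ 4)) / real n"
    by (intro divide_right_mono sum_mono loss_error_approx_loo lam) simp_all
  also have "\<dots> = kappa lam * moment 0 3 lam / (real n ^ 2 * cm ^ 2)
     + kappa lam * moment 1 3 lam / (real n ^ 3 * cm ^ 3)
     + (kappa lam)\<^sup>2 * moment 1 4 lam / (2 * real n ^ 4 * cm ^ 4)"
    by (simp add: moment_def sum.distrib add_divide_distrib sum_divide_distrib[symmetric]
        sum_distrib_left[symmetric] mult.assoc)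
      (simp add: mult_ac)
  finally show ?thesis .
qed

lemma ACV_CV_bound:
  assumes lam: "lam \<in> \<Lambda>"
  shows "ereal \<bar>ACV L gl Hl Hp z n bh lam - CV L z n bhi lam\<bar>
           \<le> kappa2 Cl3 Cp3 cl cp lpi * Bsr gl z n bh \<Lambda> 0 3 / ereal (real n ^ 2 * cm ^ 2)
             + kappa2 Cl3 Cp3 cl cp lpi * Bsr gl z n bh \<Lambda> 1 3 / ereal (real n ^ 3 * cm ^ 3)
             + (kappa2 Cl3 Cp3 cl cp lpi)\<^sup>2 * Bsr gl z n bh \<Lambda> 1 4 / ereal (2 * real n ^ 4 * cm ^ 4)"
proof -
  have moment_nonneg: "0 \<le> moment s r lam" for s r
    unfolding moment_def lip_def grad_norm_def
    by (intro divide_nonneg_nonneg sum_nonneg mult_nonneg_nonneg zero_le_power real_of_ereal_pos Lip_nonneg)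
      simp_all
  note kappa = kappa_nonneg[OF lam] kappa_le_kappa2[OF lam]
  have "ereal \<bar>ACV L gl Hl Hp z n bh lam - CV L z n bhi lam\<bar>
      \<le> ereal (kappa lam * moment 0 3 lam / (real n ^ 2 * cm ^ 2))
        + ereal (kappa lam * moment 1 3 lam / (real n ^ 3 * cm ^ 3))
        + ereal ((kappa lam)\<^sup>2 * moment 1 4 lam / (2 * real n ^ 4 * cm ^ 4))"
    using ACV_CV_le_moments[OF lam] by simp
  also have "\<dots> \<le> kappa2 Cl3 Cp3 cl cp lpi * Bsr gl z n bh \<Lambda> 0 3 / ereal (real n ^ 2 * cm ^ 2)
             + kappa2 Cl3 Cp3 cl cp lpi * Bsr gl z n bh \<Lambda> 1 3 / ereal (real n ^ 3 * cm ^ 3)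
             + (kappa2 Cl3 Cp3 cl cp lpi)\<^sup>2 * Bsr gl z n bh \<Lambda> 1 4 / ereal (2 * real n ^ 4 * cm ^ 4)"
    using n_pos pos_consts kappa
    by (intro add_mono ereal_mult_div_mono moment_nonneg moment_le_Bsr[OF lam] ereal_power2_mono)
      simp_all
  finally show ?thesis .
qed

end

theorem theorem1:
  fixes L :: "'z \<Rightarrow> real^'d \<Rightarrow> real" and \<pi> :: "real^'d \<Rightarrow> real"
    and gl :: "'z \<Rightarrow> real^'d \<Rightarrow> real^'d" and Hl :: "'z \<Rightarrow> real^'d \<Rightarrow> real^'d^'d"
    and gp :: "real^'d \<Rightarrow> real^'d" and Hp :: "real^'d \<Rightarrow> real^'d^'d"
    and z :: "nat \<Rightarrow> 'z" and n :: nat and \<Lambda> :: "real set"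
    and bh :: "real \<Rightarrow> real^'d" and bhi :: "nat \<Rightarrow> real \<Rightarrow> real^'d"
    and cl cp cm lpi Cl3 Cp3 :: real
  assumes n_pos: "n > 0"
    and grad_l: "\<And>x \<beta>. (L x has_derivative (\<lambda>h. gl x \<beta> \<bullet> h)) (at \<beta>)"
    and hess_l: "\<And>x \<beta>. (gl x has_derivative (\<lambda>h. Hl x \<beta> *v h)) (at \<beta>)"
    and grad_p: "\<And>\<beta>. (\<pi> has_derivative (\<lambda>h. gp \<beta> \<bullet> h)) (at \<beta>)"
    and hess_p: "\<And>\<beta>. (gp has_derivative (\<lambda>h. Hp \<beta> *v h)) (at \<beta>)"
    and Lambda: "\<Lambda> \<subseteq> {0..}"
    and bh_min: "\<And>lam. lam \<in> \<Lambda> \<Longrightarrow> is_arg_min (\<lambda>\<beta>. m_full L \<pi> z n \<beta> lam) (\<lambda>_. True) (bh lam)"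
    and bhi_min: "\<And>i lam. i \<in> {1..n} \<Longrightarrow> lam \<in> \<Lambda> \<Longrightarrow>
                    is_arg_min (\<lambda>\<beta>. m_loo L \<pi> z n i \<beta> lam) (\<lambda>_. True) (bhi i lam)"
    and pos_consts: "cl > 0" "cp > 0" "cm > 0"
    and a_growth: "\<And>i lam. i \<in> {1..n} \<Longrightarrow> lam \<in> \<Lambda> \<Longrightarrow>
                    gradient_growth (\<lambda>r. cm * r\<^sup>2) (\<lambda>\<beta>. m_loo L \<pi> z n i \<beta> lam)"
    and a_hess: "\<And>i lam lam' v. i \<in> {1..n} \<Longrightarrow> lam \<in> \<Lambda> \<Longrightarrow> lam' \<in> \<Lambda> \<Longrightarrow>
                    (cl + lam' * cp * (if lam \<ge> lpi then 1 else 0)) * (v \<bullet> v)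
                      \<le> v \<bullet> (hess_loo Hl Hp z n i (bh lam) lam' *v v)"
    and b_03: "Bsr gl z n bh \<Lambda> 0 3 < \<infinity>"
    and b_13: "Bsr gl z n bh \<Lambda> 1 3 < \<infinity>"
    and b_14: "Bsr gl z n bh \<Lambda> 1 4 < \<infinity>"
    and c_lip: "\<And>i lam. i \<in> {1..n} \<Longrightarrow> lam \<in> \<Lambda> \<Longrightarrow>
                    Lip_op (\<lambda>\<beta>. hess_loo Hl Hp z n i \<beta> lam) \<le> ereal (Cl3 + lam * Cp3)"
  shows "\<forall>lam\<in>\<Lambda>. ereal \<bar>ACV L gl Hl Hp z n bh lam - CV L z n bhi lam\<bar>
           \<le> kappa2 Cl3 Cp3 cl cp lpi * Bsr gl z n bh \<Lambda> 0 3 / ereal (real n ^ 2 * cm ^ 2)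
             + kappa2 Cl3 Cp3 cl cp lpi * Bsr gl z n bh \<Lambda> 1 3 / ereal (real n ^ 3 * cm ^ 3)
             + (kappa2 Cl3 Cp3 cl cp lpi)\<^sup>2 * Bsr gl z n bh \<Lambda> 1 4 / ereal (2 * real n ^ 4 * cm ^ 4)"
proof -
  interpret loo_problem L \<pi> gl Hl gp Hp z n \<Lambda> bh bhi cl cp cm lpi Cl3 Cp3
    by unfold_locales (fact assms)+
  show ?thesis using ACV_CV_bound by blast
qed

end
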